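(* If $c$ is the characteristic of a field (so $c=0$ or $c$ is a prime), then the set of non-negative integers is the disjoint union of $S_c$ and $T_c$.
   Context: Sets $S_c$: $S_0$ is the set of all non-negative integers; $S_2=\{0\}$; $S_3$ is the smallest set of non-negative integers containing $0$ such that whenever $a$ is an even element of $S_3$, the integers $3a,3a+1,3a+4,3a+5$ lie in $S_3$; for a prime $p\ge5$, with $\pi_p$ the largest integer $<p/3$, $S_p$ is the smallest set of non-negative integers containing $[0,2\pi_p]\cap\mathbb Z$ such that whenever $\theta$ is a non-negative even element of $S_p$, all non-negative integers in $[p\theta-2\pi_p-1,p\theta+2\pi_p]$ lie in $S_p$. Sets $T_c$: $T_0=\emptyset$; $T_2$ is the set of all positive integers; for an odd prime $p$, a non-negative integer $a$ lies in $T_p$ iff there exist an odd integer $J$ and $q=p^e$ with $e\ge1$ such that $Jq-\{\frac q3\}\le a<Jq+\{\frac q3\}$, where for an integer $b$, $\{\frac b3\}$ denotes the integer nearest to $b/3$ (i.e. $\frac b3,\frac{b-1}3,\frac{b+1}3$ according as $b\equiv0,1,2\pmod 3$). *)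

theory Defs
  imports Complex_Main "HOL-Computational_Algebra.Primes"
begin

inductive_set S3 :: "nat set" where
  S3_zero: "0 \<in> S3"
| S3_step: "a \<in> S3 \<Longrightarrow> even a \<Longrightarrow>
     b \<in> {3 * a, 3 * a + 1, 3 * a + 4, 3 * a + 5} \<Longrightarrow> b \<in> S3"

definition pi_p :: "nat \<Rightarrow> nat" where
  "pi_p p = (GREATEST k::nat. real k < real p / 3)"

inductive_set Sp :: "nat \<Rightarrow> nat set" for p :: nat where
  Sp_base: "a \<le> 2 * pi_p p \<Longrightarrow> a \<in> Sp p"
| Sp_step: "\<theta> \<in> Sp p \<Longrightarrow> even \<theta> \<Longrightarrow>
     int p * int \<theta> - 2 * int (pi_p p) - 1 \<le> int a \<Longrightarrow>
     int a \<le> int p * int \<theta> + 2 * int (pi_p p) \<Longrightarrow> a \<in> Sp p"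

definition S :: "nat \<Rightarrow> nat set" where
  "S c = (if c = 0 then UNIV else if c = 2 then {0} else if c = 3 then S3 else Sp c)"

definition near3 :: "int \<Rightarrow> int" where
  "near3 b = (if b mod 3 = 0 then b div 3
              else if b mod 3 = 1 then (b - 1) div 3 else (b + 1) div 3)"

definition T :: "nat \<Rightarrow> nat set" where
  "T c = (if c = 0 then {} else if c = 2 then {a. 0 < a}
          else {a. \<exists>J::int. \<exists>e::nat. odd J \<and> e \<ge> 1 \<and>
                  J * int (c ^ e) - near3 (int (c ^ e)) \<le> int a \<and>
                  int a < J * int (c ^ e) + near3 (int (c ^ e))})"

end

theory Submission
  imports Defs
begin

(* For an integer centre c and radius r write cwin c r for the window
   [c - r, c + r).  For c other than 0 and 2, the set T_c is the union of the level-e windows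
   cwin (J c^e) (near3 c^e) with e >= 1 and J odd.  Let p > 1 be coprime to 6 and P = near3 p;
   then the radius rho = p - P equals 2 pi_p + 1 from the generating rule of S_p.  The windows
   of radius rho around the even multiples of p and of radius P around the odd multiples of p
   tile the integers.  An odd window is a level-1 window of T_p, hence lies in T_p and outside
   S_p.  A positive point x of the even window around p m has the smaller "parent" m, and x lies
   in S_p resp. T_p iff m does: for S_p by the generating rule, for T_p because the level-(e+1)
   window around J p^(e+1) contains x iff the level-e window around J p^e contains m (using
   that p and p^e are +-1 modulo 6).  Strong induction along parents (complement_by_descent)
   shows that S_p and T_p are complementary.  For p = 3 the same scheme works with the parent
   2 (x div 6), and c = 0, 2 are immediate.  The file develops, in this order: the descent
   principle, windows and the windows of T_c, the case p = 3, the case p coprime to 6, and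
   finally the theorem. *)

lemma complement_by_descent:
  fixes S T :: "nat set" and W :: "nat \<Rightarrow> bool"
  assumes "0 \<in> S" "0 \<notin> T"
    and "\<And>a. W a \<Longrightarrow> a \<in> T \<and> a \<notin> S"
    and "\<And>a. \<not> W a \<Longrightarrow> 0 < a \<Longrightarrow> \<exists>b<a. (a \<in> S \<longleftrightarrow> b \<in> S) \<and> (a \<in> T \<longleftrightarrow> b \<in> T)"
  shows "a \<in> S \<longleftrightarrow> a \<notin> T"
proof (induction a rule: less_induct)
  case (less a)
  show ?case
  proof (cases "W a \<or> a = 0")
    case True
    then show ?thesis using assms(1-3) by blast
  next
    case False
    then show ?thesis using assms(4)[of a] less.IH by blast
  qed
qed

lemma near3_times3: "near3 (3 * X) = X"
  unfolding near3_def by simp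

lemma near3_times3_plus1: "near3 (3 * X + 1) = X"
  unfolding near3_def by simp

lemma near3_times3_minus1: "near3 (3 * X - 1) = X"
proof -
  have "(3 * X - 1) mod 3 = 2" by presburger
  then show ?thesis unfolding near3_def by simp
qed

lemma near3_less: "1 \<le> q \<Longrightarrow> near3 q < q"
  unfolding near3_def by (simp split: if_splits; linarith)

definition cwin :: "int \<Rightarrow> int \<Rightarrow> int \<Rightarrow> bool" where
  "cwin centre r x \<longleftrightarrow> centre - r \<le> x \<and> x < centre + r"

text \<open>Reducing x + rho modulo 2p shows that the windows of radius rho around the even multiples
  of p and of radius p - rho around the odd multiples of p cover the integers.\<close>
lemma windows_tile:
  fixes p \<rho> x :: int
  assumes "0 < \<rho>" "\<rho> < p"
  obtains m where "even m" "cwin (p * m) \<rho> x" | m where "odd m" "cwin (p * m) (p - \<rho>) x"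
proof -
  define b where "b = (x + \<rho>) div (2 * p)"
  define r where "r = (x + \<rho>) mod (2 * p)"
  have x: "x + \<rho> = 2 * p * b + r" "0 \<le> r" "r < 2 * p"
    unfolding b_def r_def using assms by (simp_all add: mult.commute)
  show ?thesis
  proof (cases "r < 2 * \<rho>")
    case True
    then have "cwin (p * (2 * b)) \<rho> x" using x unfolding cwin_def by (simp add: algebra_simps)
    then show ?thesis using that(1)[of "2 * b"] by simp
  next
    case False
    then have "cwin (p * (2 * b + 1)) (p - \<rho>) x" using x unfolding cwin_def by (simp add: algebra_simps)
    then show ?thesis using that(2)[of "2 * b + 1"] by simp
  qed
qed

lemma cwin_centres_close: "cwin c1 r1 x \<Longrightarrow> cwin c2 r2 x \<Longrightarrow> \<bar>c1 - c2\<bar> < r1 + r2"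
  unfolding cwin_def by linarith

lemma multiple_windows_close:
  fixes p k m1 m2 r1 r2 x :: int
  assumes "0 < p" "r1 + r2 \<le> k * p" "cwin (p * m1) r1 x" "cwin (p * m2) r2 x"
  shows "\<bar>m1 - m2\<bar> < k"
proof -
  have "\<bar>p * m1 - p * m2\<bar> = p * \<bar>m1 - m2\<bar>"
    using assms(1) by (simp add: abs_mult flip: right_diff_distrib)
  then have "p * \<bar>m1 - m2\<bar> < p * k"
    using cwin_centres_close[OF assms(3,4)] assms(2) by (simp add: mult.commute)
  then show ?thesis using assms(1) by simp
qed

lemma even_window_unique:
  fixes p \<rho> m1 m2 x :: int
  assumes "0 < p" "\<rho> \<le> p" "even m1" "even m2" "cwin (p * m1) \<rho> x" "cwin (p * m2) \<rho> x"
  shows "m1 = m2"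
proof -
  have "\<bar>m1 - m2\<bar> < 2" using multiple_windows_close[of p \<rho> \<rho> 2 m1 x m2] assms by simp
  then show ?thesis using assms(3,4) by presburger
qed

lemma even_odd_windows_disjoint:
  fixes p \<rho> m1 m2 x :: int
  assumes "0 < p" "even m1" "odd m2" "cwin (p * m1) \<rho> x"
  shows "\<not> cwin (p * m2) (p - \<rho>) x"
proof
  assume "cwin (p * m2) (p - \<rho>) x"
  then have "\<bar>m1 - m2\<bar> < 1" using multiple_windows_close[of p \<rho> "p - \<rho>" 1 m1 x m2] assms by simp
  then show False using assms(2,3) by presburger
qed

lemma even_window_centre_below:
  fixes p \<rho> m x :: int
  assumes "2 \<le> p" "\<rho> < p" "even m" "cwin (p * m) \<rho> x" "0 < x"
  shows "0 \<le> m \<and> m < x"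
proof -
  have "0 < p * (m + 1)" using assms(2,4,5) unfolding cwin_def by (simp add: algebra_simps)
  then have "0 \<le> m" using assms(1) by (simp add: zero_less_mult_iff)
  moreover have "m < x"
  proof (cases "m = 0")
    case False
    then have "2 \<le> m" using \<open>0 \<le> m\<close> assms(3) by presburger
    then have "2 * (m - 1) \<le> p * (m - 1)" using assms(1) by (intro mult_right_mono) auto
    then show ?thesis using assms(2,4) \<open>2 \<le> m\<close> unfolding cwin_def by (simp add: algebra_simps)
  qed (use assms(5) in simp)
  ultimately show ?thesis by blast
qed

definition level_window :: "nat \<Rightarrow> nat \<Rightarrow> int \<Rightarrow> int \<Rightarrow> bool" where
  "level_window c e J x \<longleftrightarrow> cwin (J * int (c ^ e)) (near3 (int (c ^ e))) x"

lemma T_iff: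
  assumes "c \<noteq> 0" "c \<noteq> 2"
  shows "a \<in> T c \<longleftrightarrow> (\<exists>J e. odd J \<and> 1 \<le> e \<and> level_window c e J (int a))"
  using assms unfolding T_def level_window_def cwin_def by auto

lemma level_window_zero_level: "\<not> level_window c 0 J x"
  unfolding level_window_def cwin_def by (simp add: near3_def)

lemma zero_not_in_level_window:
  assumes "1 \<le> c" "odd J"
  shows "\<not> level_window c e J 0"
proof
  define q where "q = int (c ^ e)"
  assume "level_window c e J 0"
  then have win: "J * q - near3 q \<le> 0" "0 < J * q + near3 q"
    unfolding level_window_def cwin_def q_def by simp_all
  have "1 \<le> q" using assms(1) unfolding q_def by simp
  then have small: "near3 q < q" by (rule near3_less)
  have "1 \<le> J \<or> J \<le> -1" using assms(2) by presburger
  then show False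
  proof
    assume "1 \<le> J"
    then have "q \<le> J * q" using \<open>1 \<le> q\<close> by (simp add: mult_right_mono)
    then show False using win small by linarith
  next
    assume "J \<le> -1"
    then have "J * q \<le> (-1) * q" using \<open>1 \<le> q\<close> by (intro mult_right_mono) auto
    then show False using win small by linarith
  qed
qed

lemma T_descent:
  assumes "c \<noteq> 0" "c \<noteq> 2"
    and base: "\<And>J. odd J \<Longrightarrow> \<not> level_window c 1 J (int x)"
    and step: "\<And>J e. odd J \<Longrightarrow> 1 \<le> e \<Longrightarrow>
                 level_window c (Suc e) J (int x) \<longleftrightarrow> level_window c e J (int m)"
  shows "x \<in> T c \<longleftrightarrow> m \<in> T c"
proof
  assume "x \<in> T c"
  then obtain J e where J: "odd J" "1 \<le> e" "level_window c e J (int x)"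
    using T_iff[OF assms(1,2)] by blast
  moreover have "e \<noteq> 1" using base J by blast
  ultimately obtain e' where e: "e = Suc e'" "1 \<le> e'"
    by (cases e) auto
  then show "m \<in> T c" using T_iff[OF assms(1,2)] J step by blast
next
  assume "m \<in> T c"
  then obtain J e where "odd J" "1 \<le> e" "level_window c e J (int m)"
    using T_iff[OF assms(1,2)] by blast
  then show "x \<in> T c" using T_iff[OF assms(1,2)] step[of J e] by (metis le_SucI)
qed

lemma S3_residues: "x \<in> S3 \<Longrightarrow> x mod 6 \<in> {0, 1, 4, 5}"
  by (induction rule: S3.induct) auto

lemma S3_parent:
  assumes "x mod 6 \<in> {0, 1, 4, 5}" "0 < x"
  shows "x \<in> S3 \<longleftrightarrow> 2 * (x div 6) \<in> S3"
proof
  assume "x \<in> S3"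
  then show "2 * (x div 6) \<in> S3"
  proof cases
    case (S3_step a)
    then have "a = 2 * (x div 6)" by auto
    then show ?thesis using S3_step(1) by simp
  qed (use assms in simp)
next
  define q where "q = x div 6"
  assume "2 * (x div 6) \<in> S3"
  moreover have "x = 6 * q + x mod 6" unfolding q_def by simp
  then have "x \<in> {3 * (2 * q), 3 * (2 * q) + 1, 3 * (2 * q) + 4, 3 * (2 * q) + 5}"
    using assms(1) by auto
  ultimately show "x \<in> S3" using S3_step[of "2 * q" x] unfolding q_def by simp
qed

lemma level_window_3_base: "level_window 3 1 J x \<longleftrightarrow> x = 3 * J - 1 \<or> x = 3 * J"
  using near3_times3[of 1] unfolding level_window_def cwin_def by auto

lemma level_window_3_residues:
  assumes "odd J" "level_window 3 1 J (int x)"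
  shows "x mod 6 \<in> {2, 3}"
proof -
  have "int x = 3 * J - 1 \<or> int x = 3 * J" using assms(2) level_window_3_base by blast
  then have "int x mod 6 = 2 \<or> int x mod 6 = 3" using assms(1) by presburger
  then have "int (x mod 6) = 2 \<or> int (x mod 6) = 3" by (simp add: zmod_int)
  then show ?thesis by auto
qed

lemma odd_triple_window:
  fixes k Q r :: int
  assumes "odd k" "odd Q" "r \<in> {0, 1, 4, 5}"
  shows "(- 3 * Q \<le> 3 * k + r \<and> 3 * k + r < 3 * Q) \<longleftrightarrow> (- Q \<le> k \<and> k < Q)"
proof -
  have "0 \<le> r" "r \<le> 5" using assms(3) by auto
  moreover have "k < Q \<longleftrightarrow> k \<le> Q - 2" "- Q \<le> k \<longleftrightarrow> - Q - 2 < k"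
    using assms(1,2) by presburger+
  ultimately show ?thesis by linarith
qed

lemma level_window_3_descent:
  assumes "even m" "odd J" "r \<in> {0, 1, 4, 5}"
  shows "level_window 3 (Suc (Suc e)) J (3 * m + r) \<longleftrightarrow> level_window 3 (Suc e) J m"
proof -
  define Q :: int where "Q = 3 ^ e"
  have powers: "int (3 ^ Suc (Suc e)) = 3 * (3 * Q)" "int (3 ^ Suc e) = 3 * Q"
    unfolding Q_def by simp_all
  define k where "k = m - 3 * J * Q"
  have "odd k" unfolding k_def Q_def using assms(1,2) by simp
  moreover have "odd Q" unfolding Q_def by simp
  ultimately have "(- 3 * Q \<le> 3 * k + r \<and> 3 * k + r < 3 * Q) \<longleftrightarrow> (- Q \<le> k \<and> k < Q)"
    using odd_triple_window assms(3) by blast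
  then show ?thesis
    unfolding level_window_def cwin_def powers near3_times3 k_def by (simp add: algebra_simps)
qed

text \<open>S_3 and T_3 are complementary: residues 2 and 3 modulo 6 are level-1 points of T_3, and
  every other positive x has the parent 2 (x div 6).\<close>
lemma S3_T3_complement: "a \<in> S3 \<longleftrightarrow> a \<notin> T 3"
proof (rule complement_by_descent[where W = "\<lambda>x. x mod 6 \<in> {2, 3}"])
  show "0 \<in> S3" by (rule S3_zero)
  show "0 \<notin> T 3" using zero_not_in_level_window[of 3] by (auto simp: T_iff)
next
  fix x :: nat
  assume res: "x mod 6 \<in> {2, 3}"
  define J where "J = 2 * int (x div 6) + 1"
  have "x = 6 * (x div 6) + x mod 6" by simp
  then have "int x = 6 * int (x div 6) + int (x mod 6)"
    by (metis of_nat_add of_nat_mult of_nat_numeral)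
  then have "level_window 3 1 J (int x)" using res unfolding J_def level_window_3_base by auto
  moreover have "odd J" unfolding J_def by simp
  ultimately have "x \<in> T 3" by (auto simp: T_iff)
  moreover have "x \<notin> S3" using S3_residues[of x] res by auto
  ultimately show "x \<in> T 3 \<and> x \<notin> S3" by blast
next
  fix x :: nat
  assume "x mod 6 \<notin> {2, 3}" "0 < x"
  then have res: "x mod 6 \<in> {0, 1, 4, 5}" by auto
  define m where "m = 2 * (x div 6)"
  have "x = 3 * m + x mod 6" unfolding m_def by simp
  then have x: "int x = 3 * int m + int (x mod 6)"
    by (metis of_nat_add of_nat_mult of_nat_numeral)
  have r: "int (x mod 6) \<in> {0, 1, 4, 5}" using res by auto
  have "x \<in> T 3 \<longleftrightarrow> m \<in> T 3"
  proof (rule T_descent)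
    show "\<not> level_window 3 1 J (int x)" if "odd J" for J
      using level_window_3_residues[OF that] \<open>x mod 6 \<notin> {2, 3}\<close> by blast
    show "level_window 3 (Suc e) J (int x) \<longleftrightarrow> level_window 3 e J (int m)"
      if "odd J" "1 \<le> e" for J e
      using level_window_3_descent[OF _ that(1) r, of "int m" "e - 1"] that(2) x
      unfolding m_def by simp
  qed simp_all
  moreover have "x \<in> S3 \<longleftrightarrow> m \<in> S3" unfolding m_def by (rule S3_parent[OF res \<open>0 < x\<close>])
  moreover have "m < x" unfolding m_def using \<open>0 < x\<close> by simp
  ultimately show "\<exists>b<x. (x \<in> S3 \<longleftrightarrow> b \<in> S3) \<and> (x \<in> T 3 \<longleftrightarrow> b \<in> T 3)" by blast
qed

lemma unit6_near3:
  assumes "n mod 6 = 1 \<or> n mod 6 = 5"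
  obtains \<delta> where "int n = 3 * near3 (int n) + \<delta>" "\<delta> = 1 \<or> \<delta> = -1" "even (near3 (int n))"
proof -
  define N where "N = 2 * int (n div 6)"
  have "even N" unfolding N_def by simp
  show ?thesis
  proof (cases "n mod 6 = 1")
    case True
    then have n: "int n = 3 * N + 1" unfolding N_def by presburger
    show ?thesis by (rule that[of 1]) (simp_all add: n near3_times3_plus1 \<open>even N\<close>)
  next
    case False
    then have n: "int n = 3 * (N + 2) - 1" using assms unfolding N_def by presburger
    show ?thesis
      by (rule that[of "-1"]) (use near3_times3_minus1[of "N + 2"] n \<open>even N\<close> in simp_all)
  qed
qed

lemma unit6_power:
  fixes p :: nat
  assumes "p mod 6 = 1 \<or> p mod 6 = 5"
  shows "p ^ e mod 6 = 1 \<or> p ^ e mod 6 = 5"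
proof (induction e)
  case (Suc e)
  have "p ^ Suc e mod 6 = (p mod 6) * (p ^ e mod 6) mod 6" by (simp add: mod_mult_eq)
  then show ?case using Suc assms by auto
qed simp

lemma prime_unit6:
  assumes "prime (p :: nat)" "p \<noteq> 2" "p \<noteq> 3"
  shows "p mod 6 = 1 \<or> p mod 6 = 5"
proof -
  have "\<not> 2 dvd p" "\<not> 3 dvd p" using assms by (auto simp: prime_nat_iff)
  then show ?thesis by presburger
qed

lemma pi_p_unit6:
  assumes "p mod 6 = 1 \<or> p mod 6 = 5"
  shows "2 * int (pi_p p) + 1 = int p - near3 (int p)"
proof -
  have below_third: "real k < real p / 3 \<longleftrightarrow> 3 * k < p" for k by linarith
  have "3 * ((p - 1) div 3) < p" using assms by presburger
  then have "pi_p p = (p - 1) div 3"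
    unfolding pi_p_def below_third by (intro Greatest_equality) auto
  moreover have "1 \<le> p" using assms by presburger
  ultimately have "int (pi_p p) = (int p - 1) div 3" by (simp add: zdiv_int)
  moreover obtain \<delta> where "int p = 3 * near3 (int p) + \<delta>" "\<delta> = 1 \<or> \<delta> = -1"
    using unit6_near3[OF assms] by blast
  moreover have "2 * ((3 * P + \<delta> - 1) div 3) + 1 = 3 * P + \<delta> - P"
    if "\<delta> = 1 \<or> \<delta> = -1" for P \<delta> :: int
    using that by presburger
  ultimately show ?thesis by metis
qed

lemma near3_product:
  fixes p q P N \<epsilon> \<delta> :: int
  assumes "p = 3 * P + \<epsilon>" "\<epsilon> = 1 \<or> \<epsilon> = -1" "q = 3 * N + \<delta>" "\<delta> = 1 \<or> \<delta> = -1"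
  shows "near3 (p * q) = p * N + P * \<delta>"
proof -
  define X where "X = p * N + P * \<delta>"
  have "p * q = 3 * X + \<epsilon> * \<delta>" unfolding X_def using assms(1,3) by (simp add: algebra_simps)
  moreover have "\<epsilon> * \<delta> = 1 \<or> \<epsilon> * \<delta> = -1" using assms(2,4) by auto
  ultimately show ?thesis
    unfolding X_def[symmetric] by (auto simp: near3_times3_plus1 near3_times3_minus1)
qed

lemma odd_shift_window:
  fixes p P N \<delta> k r :: int
  assumes "0 \<le> P" "\<delta> = 1 \<or> \<delta> = -1" "odd k" "even N" "- (p - P) \<le> r" "r < p - P"
  shows "(- (p * N + P * \<delta>) \<le> p * k + r \<and> p * k + r < p * N + P * \<delta>) \<longleftrightarrow> (- N \<le> k \<and> k < N)"
proof -
  have p: "0 \<le> p" using assms(1,5,6) by linarith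
  have P\<delta>: "- P \<le> P * \<delta>" "P * \<delta> \<le> P" using assms(1,2) by auto
  have below: "p * k \<le> - (p * N) - p" if "k \<le> - N - 1"
    using mult_left_mono[OF that p] by (simp add: algebra_simps)
  have above: "p * N + p \<le> p * k" if "N + 1 \<le> k"
    using mult_left_mono[OF that p] by (simp add: algebra_simps)
  have inside: "- (p * N) + p \<le> p * k \<and> p * k \<le> p * N - p" if "- N + 1 \<le> k" "k \<le> N - 1"
    using mult_left_mono[OF that(1) p] mult_left_mono[OF that(2) p] by (simp add: algebra_simps)
  have "k \<le> - N - 1 \<or> N + 1 \<le> k \<or> (- N + 1 \<le> k \<and> k \<le> N - 1)"
    and "- N \<le> k \<and> k < N \<longleftrightarrow> - N + 1 \<le> k \<and> k \<le> N - 1"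
    using assms(3,4) by presburger+
  then show ?thesis using below above inside P\<delta> assms(5,6) by linarith
qed

lemma level_window_descent:
  fixes m x J :: int
  assumes p6: "p mod 6 = 1 \<or> p mod 6 = 5"
    and "even m" "odd J" and x: "cwin (int p * m) (int p - near3 (int p)) x"
  shows "level_window p (Suc e) J x \<longleftrightarrow> level_window p e J m"
proof -
  define P where "P = near3 (int p)"
  define q where "q = int (p ^ e)"
  define N where "N = near3 q"
  obtain \<epsilon> where p: "int p = 3 * P + \<epsilon>" "\<epsilon> = 1 \<or> \<epsilon> = -1"
    using unit6_near3[OF p6] unfolding P_def by blast
  obtain \<delta> where q: "q = 3 * N + \<delta>" "\<delta> = 1 \<or> \<delta> = -1" "even N"
    using unit6_near3[OF unit6_power[OF p6, of e]] unfolding q_def N_def by blast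
  have "0 \<le> P" using p by linarith
  have R: "near3 (int p * q) = int p * N + P * \<delta>" by (rule near3_product[OF p q(1,2)])
  define k where "k = m - J * q"
  have "odd q" using q by presburger
  then have "odd k" unfolding k_def using assms(2,3) by simp
  have shift: "x - J * (int p * q) = int p * k + (x - int p * m)"
    unfolding k_def by (simp add: algebra_simps)
  have "level_window p (Suc e) J x \<longleftrightarrow>
      - (int p * N + P * \<delta>) \<le> int p * k + (x - int p * m) \<and>
      int p * k + (x - int p * m) < int p * N + P * \<delta>"
    unfolding level_window_def cwin_def R[symmetric] shift[symmetric] q_def by auto
  also have "\<dots> \<longleftrightarrow> - N \<le> k \<and> k < N"
    using odd_shift_window[OF \<open>0 \<le> P\<close> q(2) \<open>odd k\<close> q(3)] x unfolding cwin_def P_def by auto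
  also have "\<dots> \<longleftrightarrow> level_window p e J m"
    unfolding level_window_def cwin_def k_def N_def q_def by auto
  finally show ?thesis .
qed

text \<open>The generating rule of S_p phrased with even windows; the base interval is the window
  around 0.\<close>
lemma Sp_iff_even_window:
  assumes "p mod 6 = 1 \<or> p mod 6 = 5"
  shows "a \<in> Sp p \<longleftrightarrow>
    (\<exists>\<theta>\<in>Sp p. even \<theta> \<and> cwin (int p * int \<theta>) (int p - near3 (int p)) (int a))"
proof -
  have "2 * int (pi_p p) + 1 = int p - near3 (int p)" by (rule pi_p_unit6[OF assms])
  then have rule_window:
    "(int p * int \<theta> - 2 * int (pi_p p) - 1 \<le> int a \<and> int a \<le> int p * int \<theta> + 2 * int (pi_p p))
       \<longleftrightarrow> cwin (int p * int \<theta>) (int p - near3 (int p)) (int a)" for \<theta>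
    unfolding cwin_def by linarith
  show ?thesis
  proof
    assume "a \<in> Sp p"
    then show "\<exists>\<theta>\<in>Sp p. even \<theta> \<and> cwin (int p * int \<theta>) (int p - near3 (int p)) (int a)"
    proof cases
      case Sp_base
      then have "cwin (int p * int 0) (int p - near3 (int p)) (int a)" using rule_window[of 0] by simp
      moreover have "0 \<in> Sp p" by (rule Sp.Sp_base) simp
      ultimately show ?thesis by fastforce
    qed (use rule_window in blast)
  qed (use Sp.Sp_step rule_window in blast)
qed

lemma unit6_radii:
  assumes p6: "p mod 6 = 1 \<or> p mod 6 = 5" and "1 < p"
  shows "0 < near3 (int p)" "near3 (int p) < int p"
proof -
  obtain \<epsilon> where "int p = 3 * near3 (int p) + \<epsilon>" "\<epsilon> = 1 \<or> \<epsilon> = -1"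
    using unit6_near3[OF p6] by blast
  moreover have "5 \<le> p" using assms by presburger
  ultimately show "0 < near3 (int p)" "near3 (int p) < int p" by auto
qed

lemma odd_window_separated:
  assumes p6: "p mod 6 = 1 \<or> p mod 6 = 5"
    and m: "odd m" "cwin (int p * m) (near3 (int p)) (int a)"
  shows "a \<in> T p \<and> a \<notin> Sp p"
proof
  have "p \<noteq> 0" "p \<noteq> 2" using p6 by presburger+
  moreover have "level_window p 1 m (int a)"
    using m(2) unfolding level_window_def by (simp add: mult.commute)
  ultimately show "a \<in> T p" using T_iff m(1) by (metis order_refl)
  show "a \<notin> Sp p"
  proof
    assume "a \<in> Sp p"
    then obtain \<theta> where "even (int \<theta>)" "cwin (int p * int \<theta>) (int p - near3 (int p)) (int a)"
      using Sp_iff_even_window[OF p6, of a] by auto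
    moreover have "0 < int p" using p6 by presburger
    ultimately have "\<not> cwin (int p * m) (int p - (int p - near3 (int p))) (int a)"
      using even_odd_windows_disjoint m(1) by blast
    then show False using m(2) by simp
  qed
qed

lemma even_window_parent:
  assumes p6: "p mod 6 = 1 \<or> p mod 6 = 5" and "1 < p"
    and m: "even m" "cwin (int p * int m) (int p - near3 (int p)) (int a)"
  shows "a \<in> Sp p \<longleftrightarrow> m \<in> Sp p" "a \<in> T p \<longleftrightarrow> m \<in> T p"
proof
  assume "a \<in> Sp p"
  then obtain \<theta> where \<theta>: "\<theta> \<in> Sp p" "even (int \<theta>)"
    "cwin (int p * int \<theta>) (int p - near3 (int p)) (int a)"
    using Sp_iff_even_window[OF p6, of a] by auto
  have "int \<theta> = int m"
    using even_window_unique[OF _ _ \<theta>(2) _ \<theta>(3) m(2)] unit6_radii[OF assms(1,2)] m(1) by simp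
  then show "m \<in> Sp p" using \<theta>(1) by simp
next
  assume "m \<in> Sp p"
  then show "a \<in> Sp p" using Sp_iff_even_window[OF p6, of a] m by auto
next
  have descent: "level_window p (Suc e) J (int a) \<longleftrightarrow> level_window p e J (int m)" if "odd J" for J e
    using level_window_descent[OF p6 _ that m(2)] m(1) by simp
  show "a \<in> T p \<longleftrightarrow> m \<in> T p"
  proof (rule T_descent)
    show "p \<noteq> 0" "p \<noteq> 2" using p6 by presburger+
    show "\<not> level_window p 1 J (int a)" if "odd J" for J
      using descent[OF that, of 0] level_window_zero_level by simp
  qed (use descent in blast)
qed

lemma Sp_T_complement:
  assumes p6: "p mod 6 = 1 \<or> p mod 6 = 5" and "1 < p"
  shows "a \<in> Sp p \<longleftrightarrow> a \<notin> T p"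
proof (rule complement_by_descent
    [where W = "\<lambda>a. \<exists>m. odd m \<and> cwin (int p * m) (near3 (int p)) (int a)"])
  show "0 \<in> Sp p" by (rule Sp.Sp_base) simp
  have "p \<noteq> 0" "p \<noteq> 2" using p6 by presburger+
  then show "0 \<notin> T p" using zero_not_in_level_window[of p] \<open>1 < p\<close> by (auto simp: T_iff)
  show "a \<in> T p \<and> a \<notin> Sp p" if "\<exists>m. odd m \<and> cwin (int p * m) (near3 (int p)) (int a)" for a
    using odd_window_separated[OF p6] that by blast
next
  fix a :: nat
  assume no_odd: "\<not> (\<exists>m. odd m \<and> cwin (int p * m) (near3 (int p)) (int a))" and "0 < a"
  have radii: "0 < int p - near3 (int p)" "int p - near3 (int p) < int p"
    using unit6_radii[OF assms] by auto
  obtain m where m: "even m" "cwin (int p * m) (int p - near3 (int p)) (int a)"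
    using windows_tile[OF radii, of "int a"] no_odd by auto
  moreover have "2 \<le> int p" using \<open>1 < p\<close> by simp
  ultimately have "0 \<le> m" "m < int a"
    using even_window_centre_below[OF _ radii(2)] \<open>0 < a\<close> by auto
  then have "nat m < a" "even (nat m)" "cwin (int p * int (nat m)) (int p - near3 (int p)) (int a)"
    using m by (auto simp: even_nat_iff)
  then show "\<exists>b<a. (a \<in> Sp p \<longleftrightarrow> b \<in> Sp p) \<and> (a \<in> T p \<longleftrightarrow> b \<in> T p)"
    using even_window_parent[OF assms] by blast
qed

theorem theorem6p1:
  fixes c :: nat
  assumes "c = 0 \<or> prime c"
  shows "S c \<union> T c = UNIV \<and> S c \<inter> T c = {}"
proof -
  have "a \<in> S c \<longleftrightarrow> a \<notin> T c" for a
  proof -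
    consider "c = 0" | "c = 2" | "c = 3" | "c mod 6 = 1 \<or> c mod 6 = 5" "1 < c"
      using assms prime_unit6 prime_gt_1_nat by blast
    then show ?thesis
    proof cases
      case 3
      then show ?thesis using S3_T3_complement by (simp add: S_def)
    next
      case 4
      then have "S c = Sp c" by (auto simp: S_def)
      then show ?thesis using Sp_T_complement[OF 4] by simp
    qed (simp_all add: S_def T_def)
  qed
  then show ?thesis by blast
qed

end
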